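(* For every bimodal model $\mathcal{M}=\langle S,R_1,R_2,V\rangle$ there exist a serial bimodal model $\mathcal{M}'$ (both relations serial) and a surjective $\boxdot$-morphism $g$ from $\mathcal{M}'$ onto $\mathcal{M}$; consequently, for every state $x$ of $\mathcal{M}'$ and every $\phi\in\mathcal{L}(\boxdot)$, $\mathcal{M}',x\vDash\phi$ iff $\mathcal{M},g(x)\vDash\phi$, and every state of $\mathcal{M}$ is of the form $g(x)$.
   Context: Fix a nonempty set $\mathbf{P}$ of propositional variables. A bimodal model is $\langle S,R_1,R_2,V\rangle$ with $S$ nonempty, $R_1,R_2\subseteq S\times S$, $V:\mathbf{P}\to\mathcal{P}(S)$. $\mathcal{L}(\boxdot):\ \phi::=p\mid\neg\phi\mid(\phi\wedge\phi)\mid\boxdot\phi$, with $\mathcal{M},s\vDash\boxdot\phi$ iff for all $t,u$ with $sR_1t$ and $sR_2u$, ($\mathcal{M},t\vDash\phi\iff\mathcal{M},u\vDash\phi$); atoms and Booleans as usual. A function $f:S\to S'$ is a $\boxdot$-morphism from $\langle S,R_1,R_2,V\rangle$ to $\langle S',R_1',R_2',V'\rangle$ if for all $x\in S$: (Var) $x\in V(p)$ iff $f(x)\in V'(p)$ for all $p$; (Forth) for all $y,z\in S$, if $xR_1y$, $xR_2z$ and $f(y)\neq f(z)$, then $f(x)R_1'f(y)$ and $f(x)R_2'f(z)$; (Back) for all $y',z'\in S'$, if $f(x)R_1'y'$, $f(x)R_2'z'$ and $y'\neq z'$, then there are $y,z\in S$ with $xR_1y$, $xR_2z$, $f(y)=y'$,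 $f(z)=z'$. *)

theory Defs
  imports Main
begin

record ('s, 'p) bimodel =
  St :: "'s set"
  R1 :: "'s \<Rightarrow> 's \<Rightarrow> bool"
  R2 :: "'s \<Rightarrow> 's \<Rightarrow> bool"
  Val :: "'p \<Rightarrow> 's set"

definition is_model :: "('s, 'p) bimodel \<Rightarrow> bool" where
  "is_model M \<longleftrightarrow> St M \<noteq> {}
     \<and> (\<forall>x y. R1 M x y \<longrightarrow> x \<in> St M \<and> y \<in> St M)
     \<and> (\<forall>x y. R2 M x y \<longrightarrow> x \<in> St M \<and> y \<in> St M)
     \<and> (\<forall>p. Val M p \<subseteq> St M)"

definition serial_model :: "('s, 'p) bimodel \<Rightarrow> bool" where
  "serial_model M \<longleftrightarrow> (\<forall>x\<in>St M. (\<exists>y. R1 M x y) \<and> (\<exists>z. R2 M x z))"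

datatype 'p form = Atom 'p | Neg "'p form" | Conj "'p form" "'p form" | Dot "'p form"

fun sat :: "('s, 'p) bimodel \<Rightarrow> 's \<Rightarrow> 'p form \<Rightarrow> bool" where
  "sat M s (Atom p) = (s \<in> Val M p)"
| "sat M s (Neg \<phi>) = (\<not> sat M s \<phi>)"
| "sat M s (Conj \<phi> \<psi>) = (sat M s \<phi> \<and> sat M s \<psi>)"
| "sat M s (Dot \<phi>) = (\<forall>t u. R1 M s t \<longrightarrow> R2 M s u \<longrightarrow> (sat M t \<phi> \<longleftrightarrow> sat M u \<phi>))"

definition dot_morphism :: "('s, 'p) bimodel \<Rightarrow> ('t, 'p) bimodel \<Rightarrow> ('s \<Rightarrow> 't) \<Rightarrow> bool" where
  "dot_morphism M M' f \<longleftrightarrow>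
     (\<forall>x\<in>St M. f x \<in> St M') \<and>
     (\<forall>x\<in>St M.
        (\<forall>p. x \<in> Val M p \<longleftrightarrow> f x \<in> Val M' p) \<and>
        (\<forall>y\<in>St M. \<forall>z\<in>St M. R1 M x y \<longrightarrow> R2 M x z \<longrightarrow> f y \<noteq> f z \<longrightarrow>
             R1 M' (f x) (f y) \<and> R2 M' (f x) (f z)) \<and>
        (\<forall>y'\<in>St M'. \<forall>z'\<in>St M'. R1 M' (f x) y' \<longrightarrow> R2 M' (f x) z' \<longrightarrow> y' \<noteq> z' \<longrightarrow>
             (\<exists>y\<in>St M. \<exists>z\<in>St M. R1 M x y \<and> R2 M x z \<and> f y = y' \<and> f z = z')))"

end

theory Submission
  imports Defs
begin

text \<open>
  A state at which one of the two relations has no successor satisfies every formula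
  \<open>\<boxdot>\<phi>\<close> vacuously. Replacing all its outgoing edges by a common loop in both relations makes
  the model serial without changing this: the only pair of successors is then \<open>(x, x)\<close>.
  Projection onto the original state is a \<open>\<boxdot>\<close>-morphism, and \<open>\<boxdot>\<close>-morphisms preserve truth of
  all formulas, because the two successors they have to transport are only needed when
  their images differ.
\<close>

lemma dot_morphism_sat:
  assumes M: "is_model M" and M': "is_model M'" and f: "dot_morphism M M' f"
  shows "x \<in> St M \<Longrightarrow> sat M x \<phi> \<longleftrightarrow> sat M' (f x) \<phi>"
proof (induction \<phi> arbitrary: x)
  case (Atom p)
  then show ?case using f by (simp add: dot_morphism_def)
next
  case (Dot \<phi>)
  have succ: "y \<in> St M" if "R1 M x y \<or> R2 M x y" for y
    using M that unfolding is_model_def by blast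
  have succ': "y' \<in> St M'" if "R1 M' (f x) y' \<or> R2 M' (f x) y'" for y'
    using M' that unfolding is_model_def by blast
  show ?case
  proof
    assume sat': "sat M' (f x) (Dot \<phi>)"
    show "sat M x (Dot \<phi>)"
    proof (simp only: sat.simps, intro allI impI)
      fix t u assume tu: "R1 M x t" "R2 M x u"
      then have "t \<in> St M" "u \<in> St M" using succ by blast+
      moreover have "sat M' (f t) \<phi> \<longleftrightarrow> sat M' (f u) \<phi>"
      proof (cases "f t = f u")
        case False
        then have "R1 M' (f x) (f t)" "R2 M' (f x) (f u)"
          using f Dot.prems tu \<open>t \<in> St M\<close> \<open>u \<in> St M\<close> unfolding dot_morphism_def by blast+
        then show ?thesis using sat' by simp
      qed simp
      ultimately show "sat M t \<phi> \<longleftrightarrow> sat M u \<phi>" using Dot.IH by blast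
    qed
  next
    assume sat: "sat M x (Dot \<phi>)"
    show "sat M' (f x) (Dot \<phi>)"
    proof (simp only: sat.simps, intro allI impI)
      fix t' u' assume tu': "R1 M' (f x) t'" "R2 M' (f x) u'"
      show "sat M' t' \<phi> \<longleftrightarrow> sat M' u' \<phi>"
      proof (cases "t' = u'")
        case False
        then obtain t u where "t \<in> St M" "u \<in> St M" "R1 M x t" "R2 M x u" "f t = t'" "f u = u'"
          using f Dot.prems tu' succ' unfolding dot_morphism_def by meson
        then show ?thesis using sat Dot.IH by auto
      qed simp
    qed
  qed
qed simp_all

definition has_successors :: "('s, 'p) bimodel \<Rightarrow> 's \<Rightarrow> bool" where
  "has_successors M x \<longleftrightarrow> (\<exists>y. R1 M x y) \<and> (\<exists>z. R2 M x z)"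

definition serialize :: "('s, 'p) bimodel \<Rightarrow> ('s \<times> nat, 'p) bimodel" where
  "serialize M = \<lparr> St = St M \<times> {0},
     R1 = (\<lambda>(x, i) (y, j). x \<in> St M \<and> i = 0 \<and> j = 0 \<and> y \<in> St M \<and>
                          (if has_successors M x then R1 M x y else y = x)),
     R2 = (\<lambda>(x, i) (y, j). x \<in> St M \<and> i = 0 \<and> j = 0 \<and> y \<in> St M \<and>
                          (if has_successors M x then R2 M x y else y = x)),
     Val = (\<lambda>p. Val M p \<times> {0}) \<rparr>"

lemma St_serialize [simp]: "St (serialize M) = St M \<times> {0}"
  by (simp add: serialize_def)

lemma is_model_serialize: "is_model M \<Longrightarrow> is_model (serialize M)"
  by (fastforce simp: is_model_def serialize_def)

lemma serial_model_serialize: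
  assumes "is_model M"
  shows "serial_model (serialize M)"
  unfolding serial_model_def
proof
  fix xi assume "xi \<in> St (serialize M)"
  then obtain x where x: "xi = (x, 0)" "x \<in> St M" by auto
  show "(\<exists>y. R1 (serialize M) xi y) \<and> (\<exists>z. R2 (serialize M) xi z)"
  proof (cases "has_successors M x")
    case True
    then obtain y z where "R1 M x y" "R2 M x z" by (auto simp: has_successors_def)
    moreover have "y \<in> St M" "z \<in> St M"
      using calculation assms unfolding is_model_def by blast+
    ultimately show ?thesis using True x
      by (intro conjI exI[of _ "(y, 0)"] exI[of _ "(z, 0)"]) (auto simp: serialize_def)
  next
    case False
    then show ?thesis using x
      by (intro conjI exI[of _ "(x, 0)"]) (auto simp: serialize_def)
  qed
qed

lemma dot_morphism_fst_serialize:
  "is_model M \<Longrightarrow> dot_morphism (serialize M) M fst"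
  by (auto simp: dot_morphism_def serialize_def has_successors_def is_model_def)

theorem mainTheorem10:
  fixes M :: "('s, 'p) bimodel"
  assumes "is_model M"
  shows "\<exists>(M' :: ('s \<times> nat, 'p) bimodel) g.
           is_model M' \<and> serial_model M' \<and> dot_morphism M' M g \<and> g ` St M' = St M \<and>
           (\<forall>x\<in>St M'. \<forall>\<phi>. sat M' x \<phi> \<longleftrightarrow> sat M (g x) \<phi>) \<and>
           (\<forall>s\<in>St M. \<exists>x\<in>St M'. s = g x)"
proof (intro exI conjI)
  let ?M' = "serialize M"
  show model': "is_model ?M'" using assms by (rule is_model_serialize)
  show "serial_model ?M'" using assms by (rule serial_model_serialize)
  show morph: "dot_morphism ?M' M fst" using assms by (rule dot_morphism_fst_serialize)
  show "\<forall>x\<in>St ?M'. \<forall>\<phi>. sat ?M' x \<phi> \<longleftrightarrow> sat M (fst x) \<phi>"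
    using dot_morphism_sat[OF model' assms morph] by blast
  show "fst ` St ?M' = St M" by force
  show "\<forall>s\<in>St M. \<exists>x\<in>St ?M'. s = fst x" by force
qed

end
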